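(* Let $\xi<-6$. There exists $\phi_0\in(0,\pi/4]$ such that for every $\phi\in(0,\phi_0]$ there is a constant $c=c(\xi,\phi)>0$ with the following property: for $z=|z|e^{\mathrm{i}w}$, $$\operatorname{Re}[2\mathrm{i}\theta(z)]\ge c|\sin w|(|z|^{-1}-|z|)\quad\text{for } z\in\Omega_{01}\cup\Omega_{02},$$ $$\operatorname{Re}[2\mathrm{i}\theta(z)]\le -c|\sin w|(|z|^{-1}-|z|)\quad\text{for } z\in\Omega_{03}\cup\Omega_{04}.$$
   Context: $\theta(z)=\frac12(z+z^{-1})\big[\xi-2+(z-z^{-1})^2\big]$. For $\xi<-6$ let $\zeta_1=\sqrt{(-\xi-\sqrt{\xi^2-36})/6}\in(0,1)$ (the smallest positive stationary point of $\theta$). Writing $z=u+\mathrm{i}v$, the regions are $\Omega_{01}=\{0<u<\zeta_1/2,\ 0<v<u\tan\phi\}$, $\Omega_{02}=\{-\zeta_1/2<u<0,\ 0<v<|u|\tan\phi\}$, $\Omega_{03}=\{-\zeta_1/2<u<0,\ -|u|\tan\phi<v<0\}$, $\Omega_{04}=\{0<u<\zeta_1/2,\ -u\tan\phi<v<0\}$. *)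

theory Defs
  imports "HOL-Complex_Analysis.Complex_Analysis"
begin

definition theta :: "real \<Rightarrow> complex \<Rightarrow> complex" where
  "theta \<xi> z = (1/2) * (z + inverse z) * (complex_of_real \<xi> - 2 + (z - inverse z)^2)"

definition zeta1 :: "real \<Rightarrow> real" where
  "zeta1 \<xi> = sqrt ((- \<xi> - sqrt (\<xi>^2 - 36)) / 6)"

definition Omega01 :: "real \<Rightarrow> real \<Rightarrow> complex set" where
  "Omega01 \<xi> \<phi> = {z. 0 < Re z \<and> Re z < zeta1 \<xi> / 2 \<and> 0 < Im z \<and> Im z < Re z * tan \<phi>}"

definition Omega02 :: "real \<Rightarrow> real \<Rightarrow> complex set" where
  "Omega02 \<xi> \<phi> = {z. - zeta1 \<xi> / 2 < Re z \<and> Re z < 0 \<and> 0 < Im z \<and> Im z < \<bar>Re z\<bar> * tan \<phi>}"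

definition Omega03 :: "real \<Rightarrow> real \<Rightarrow> complex set" where
  "Omega03 \<xi> \<phi> = {z. - zeta1 \<xi> / 2 < Re z \<and> Re z < 0 \<and> - \<bar>Re z\<bar> * tan \<phi> < Im z \<and> Im z < 0}"

definition Omega04 :: "real \<Rightarrow> real \<Rightarrow> complex set" where
  "Omega04 \<xi> \<phi> = {z. 0 < Re z \<and> Re z < zeta1 \<xi> / 2 \<and> - Re z * tan \<phi> < Im z \<and> Im z < 0}"

end

theory Submission imports Defs begin

text \<open>Writing \<open>z = r e\<^sup>i\<^sup>w\<close>, one has \<open>Re (2i\<theta>(z)) = sin w (1/r - r) F(r\<^sup>2, sin\<^sup>2 w)\<close> with
  \<open>F(p, s) = (p + 2 + 1/p)(3 - 4s) + 4s + \<xi> - 6\<close>. The function \<open>F(p, 0) = 3p + 3/p + \<xi>\<close>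
  decreases on \<open>(0, 1]\<close> and vanishes at \<open>p = \<zeta>\<^sub>1\<^sup>2\<close>; on the four sectors \<open>r\<^sup>2 < \<zeta>\<^sub>1\<^sup>2/2\<close>, so
  \<open>F(r\<^sup>2, 0) \<ge> d = F(\<zeta>\<^sub>1\<^sup>2/2, 0) > 0\<close>, and for \<open>tan \<phi>\<close> small the loss caused by
  \<open>sin\<^sup>2 w < tan\<^sup>2 \<phi>\<close> is at most \<open>d/2\<close>. Hence \<open>c = d/2\<close> works, the sign being that of \<open>sin w\<close>.\<close>

definition theta_factor :: "real \<Rightarrow> real \<Rightarrow> real \<Rightarrow> real" where
  "theta_factor \<xi> p s = (p + 2 + 1/p) * (3 - 4 * s) + 4 * s + \<xi> - 6"

lemma theta_factor_0: "theta_factor \<xi> p 0 = 3 * p + 3 / p + \<xi>"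
  by (simp add: theta_factor_def algebra_simps)

lemma Re_2i_theta_Complex:
  fixes u v \<xi> :: real
  defines "p \<equiv> u\<^sup>2 + v\<^sup>2"
  assumes p: "p > 0"
  shows "Re (2 * \<i> * theta \<xi> (Complex u v)) = v * (1 - p) / p * theta_factor \<xi> p (v\<^sup>2 / p)"
proof -
  have uu: "u * (u * x) = (p - v * v) * x" for x
    by (simp add: p_def power2_eq_square algebra_simps)
  have inv: "inverse (Complex u v) = Complex (u/p) (-v/p)"
    by (simp add: inverse_complex.code p_def power2_eq_square)
  have "Re (2 * \<i> * theta \<xi> (Complex u v)) = - (v * (p - 1) / p) *
      (2 * (p + 1)\<^sup>2 * u * u / p / p + (\<xi> - 2 + (u * u * (p - 1)\<^sup>2 - v * v * (p + 1)\<^sup>2) / p / p))"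
    unfolding theta_def inv using p by (simp add: power2_eq_square field_simps)
  also have "\<dots> = v * (1 - p) / p * theta_factor \<xi> p (v\<^sup>2 / p)"
    unfolding theta_factor_def using p
    by (simp add: power2_eq_square field_simps) (simp add: algebra_simps uu)
  finally show ?thesis .
qed

lemma Re_2i_theta_polar:
  assumes "z \<noteq> 0"
  shows "Re (2 * \<i> * theta \<xi> z) =
    sin (Arg z) * (1 / cmod z - cmod z) * theta_factor \<xi> ((cmod z)\<^sup>2) ((sin (Arg z))\<^sup>2)"
proof -
  have r: "cmod z > 0" and r2: "(cmod z)\<^sup>2 = (Re z)\<^sup>2 + (Im z)\<^sup>2"
    using assms by (simp_all add: cmod_power2)
  have p: "0 < (Re z)\<^sup>2 + (Im z)\<^sup>2"
    using r r2 by (metis zero_less_power)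
  have "Re (2 * \<i> * theta \<xi> z) = Im z * (1 - (cmod z)\<^sup>2) / (cmod z)\<^sup>2 *
      theta_factor \<xi> ((cmod z)\<^sup>2) ((Im z)\<^sup>2 / (cmod z)\<^sup>2)"
    unfolding r2 using Re_2i_theta_Complex[OF p, of \<xi>] by simp
  then show ?thesis
    using r by (simp add: sin_Arg[OF assms] power_divide field_simps power2_eq_square)
qed

lemma add_inverse_less:
  fixes p t :: real
  assumes "0 < p" "p < t" "t \<le> 1"
  shows "t + 1 / t < p + 1 / p"
proof -
  have "p * t < 1 * 1"
    using assms by (intro mult_less_le_imp_less) auto
  then have "0 < (t - p) * (1 - p * t) / (p * t)"
    using assms by simp
  also have "(t - p) * (1 - p * t) / (p * t) = (p + 1 / p) - (t + 1 / t)"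
    using assms by (simp add: field_simps)
  finally show ?thesis by simp
qed

lemma add_inverse_le:
  fixes p t :: real
  assumes "0 < p" "p \<le> t" "t \<le> 1"
  shows "t + 1 / t \<le> p + 1 / p"
  using add_inverse_less[of p t] assms by (cases "p = t") auto

text \<open>As \<open>d < 3K\<close> for \<open>K = t + 2 + 1/t\<close>, the bound on \<open>s\<close> forces \<open>3 - 4s \<ge> 0\<close>; hence
  \<open>F(p, s) \<ge> K(3 - 4s) + 4s + \<xi> - 6 \<ge> d - 4sK \<ge> d/2\<close>.\<close>

lemma theta_factor_lower_bound:
  fixes \<xi> t p s :: real
  defines "d \<equiv> theta_factor \<xi> t 0"
  assumes "0 < p" "p \<le> t" "t \<le> 1" "\<xi> < 6" "0 \<le> d"
    and "0 \<le> s" "s \<le> d / (8 * (t + 2 + 1/t))"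
  shows "d / 2 \<le> theta_factor \<xi> p s"
proof -
  define K where "K = t + 2 + 1/t"
  have K: "0 < K" "K \<le> p + 2 + 1/p"
    using assms add_inverse_le[of p t] by (simp_all add: K_def add_pos_pos)
  have d: "d = 3 * K + \<xi> - 6"
    unfolding d_def K_def theta_factor_0 by simp
  have "4 * s * K \<le> d / 2"
    using assms(8) K by (simp add: K_def field_simps)
  moreover have "s * K < 3 / 8 * K"
    using \<open>4 * s * K \<le> d / 2\<close> d \<open>\<xi> < 6\<close> by linarith
  then have "s \<le> 3 / 4"
    using K by simp
  then have "K * (3 - 4 * s) \<le> (p + 2 + 1/p) * (3 - 4 * s)"
    using K by (intro mult_right_mono) auto
  then have "d - 4 * s * K + 4 * s \<le> theta_factor \<xi> p s"
    unfolding theta_factor_def d by (simp add: algebra_simps)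
  ultimately show ?thesis
    using \<open>0 \<le> s\<close> by linarith
qed

lemma sector_bounds:
  fixes z :: complex and a \<tau> :: real
  assumes "\<bar>Re z\<bar> < a" "\<bar>Im z\<bar> < \<bar>Re z\<bar> * \<tau>" "\<tau> \<le> 1"
  shows "0 < cmod z" "(cmod z)\<^sup>2 < 2 * a\<^sup>2" "(sin (Arg z))\<^sup>2 < \<tau>\<^sup>2"
proof -
  have "0 < \<bar>Re z\<bar> * \<tau>"
    using abs_ge_zero assms(2) by (rule le_less_trans)
  then have u: "0 < \<bar>Re z\<bar>" "0 < \<tau>"
    by (auto simp: zero_less_mult_iff)
  have v: "(Im z)\<^sup>2 < (Re z)\<^sup>2 * \<tau>\<^sup>2"
    using power_strict_mono[OF assms(2), of 2] by (simp add: power_mult_distrib)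
  also have "\<dots> \<le> (Re z)\<^sup>2"
    using assms(3) u by (simp add: mult_left_le power_le_one)
  finally have "(cmod z)\<^sup>2 < 2 * (Re z)\<^sup>2"
    by (simp add: cmod_power2)
  also have "\<dots> < 2 * a\<^sup>2"
    using power_strict_mono[OF assms(1), of 2] by simp
  finally show "(cmod z)\<^sup>2 < 2 * a\<^sup>2" .
  show "0 < cmod z"
    using u by auto
  have "(sin (Arg z))\<^sup>2 = (Im z)\<^sup>2 / ((Re z)\<^sup>2 + (Im z)\<^sup>2)"
    using \<open>0 < cmod z\<close> by (simp add: sin_Arg power_divide cmod_power2)
  also have "\<dots> \<le> (Im z)\<^sup>2 / (Re z)\<^sup>2"
    using u by (intro divide_left_mono) (auto simp: zero_less_mult_iff add_pos_nonneg)
  also have "\<dots> < \<tau>\<^sup>2"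
    using v u by (simp add: divide_simps mult.commute)
  finally show "(sin (Arg z))\<^sup>2 < \<tau>\<^sup>2" .
qed

lemma Re_2i_theta_bounds:
  assumes "0 < cmod z" "cmod z < 1" "c \<le> theta_factor \<xi> ((cmod z)\<^sup>2) ((sin (Arg z))\<^sup>2)"
  shows "0 < Im z \<Longrightarrow> c * \<bar>sin (Arg z)\<bar> * (1 / cmod z - cmod z) \<le> Re (2 * \<i> * theta \<xi> z)"
    and "Im z < 0 \<Longrightarrow> Re (2 * \<i> * theta \<xi> z) \<le> - c * \<bar>sin (Arg z)\<bar> * (1 / cmod z - cmod z)"
proof -
  have "cmod z * cmod z < 1 * 1"
    using assms(1,2) by (intro mult_less_le_imp_less) auto
  then have z: "z \<noteq> 0" and w: "0 < 1 / cmod z - cmod z"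
    using assms(1) by (auto simp: field_simps)
  define a where "a = sin (Arg z) * (1 / cmod z - cmod z)"
  define F where "F = theta_factor \<xi> ((cmod z)\<^sup>2) ((sin (Arg z))\<^sup>2)"
  have Re: "Re (2 * \<i> * theta \<xi> z) = a * F"
    unfolding Re_2i_theta_polar[OF z] a_def F_def ..
  have abs: "b * \<bar>sin (Arg z)\<bar> * (1 / cmod z - cmod z) = b * \<bar>a\<bar>" for b
    using w by (simp add: a_def abs_mult)
  have sgn: "sgn a = sgn (Im z)"
    using assms(1,2) w by (simp add: a_def sin_Arg[OF z] sgn_mult sgn_divide)
  show "c * \<bar>sin (Arg z)\<bar> * (1 / cmod z - cmod z) \<le> Re (2 * \<i> * theta \<xi> z)" if "0 < Im z"
  proof -
    have "0 < a" using sgn that by (simp add: sgn_1_pos)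
    then show ?thesis
      unfolding Re abs using assms(3) by (simp add: F_def mult_left_mono mult.commute)
  qed
  show "Re (2 * \<i> * theta \<xi> z) \<le> - c * \<bar>sin (Arg z)\<bar> * (1 / cmod z - cmod z)" if "Im z < 0"
  proof -
    have "a < 0" using sgn that by (simp add: sgn_1_neg)
    then show ?thesis
      unfolding Re abs using assms(3) by (simp add: F_def mult_left_mono_neg mult.commute)
  qed
qed

lemma zeta1_sq:
  fixes \<xi> :: real
  assumes "\<xi> < -6"
  shows "0 < (zeta1 \<xi>)\<^sup>2" "(zeta1 \<xi>)\<^sup>2 < 1" "3 * (zeta1 \<xi>)\<^sup>2 + 3 / (zeta1 \<xi>)\<^sup>2 + \<xi> = 0"
proof -
  define S where "S = sqrt (\<xi>\<^sup>2 - 36)"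
  define T where "T = (- \<xi> - S) / 6"
  have "6\<^sup>2 < (-\<xi>)\<^sup>2"
    using assms by (intro power_strict_mono) auto
  then have S2: "S\<^sup>2 = \<xi>\<^sup>2 - 36" and S0: "0 \<le> S"
    unfolding S_def by simp_all
  have "S\<^sup>2 < (- \<xi>)\<^sup>2"
    using S2 by simp
  then have "S < - \<xi>"
    using assms by (auto intro: power2_less_imp_less)
  then have T0: "0 < T"
    unfolding T_def by simp
  then have zT: "(zeta1 \<xi>)\<^sup>2 = T"
    unfolding zeta1_def T_def S_def[symmetric] by simp
  with T0 show "0 < (zeta1 \<xi>)\<^sup>2"
    by simp
  have "(-\<xi> - 6)\<^sup>2 < S\<^sup>2"
    unfolding S2 using assms by (simp add: power2_eq_square algebra_simps)
  then have "-\<xi> - 6 < S"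
    using S0 by (rule power2_less_imp_less)
  then show "(zeta1 \<xi>)\<^sup>2 < 1"
    unfolding zT T_def by simp
  have "36 * (3 * T\<^sup>2 + \<xi> * T + 3) = 3 * S\<^sup>2 - 3 * \<xi>\<^sup>2 + 108"
    unfolding T_def by (simp add: power2_eq_square field_simps)
  then have "3 * T\<^sup>2 + \<xi> * T + 3 = 0"
    using S2 by simp
  then show "3 * (zeta1 \<xi>)\<^sup>2 + 3 / (zeta1 \<xi>)\<^sup>2 + \<xi> = 0"
    using T0 unfolding zT by (simp add: field_simps power2_eq_square)
qed

lemma half_zeta1_margin:
  fixes \<xi> :: real
  defines "t \<equiv> (zeta1 \<xi>)\<^sup>2 / 2"
  assumes "\<xi> < -6"
  shows "0 < t" "t < 1" "0 < theta_factor \<xi> t 0" "theta_factor \<xi> t 0 < 8 * (t + 2 + 1/t)"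
proof -
  show t: "0 < t" "t < 1"
    using zeta1_sq(1,2)[OF assms(2)] by (simp_all add: t_def)
  have "0 = 3 * (2 * t + 1 / (2 * t)) + \<xi>"
    using zeta1_sq(3)[OF assms(2)] by (simp add: t_def algebra_simps)
  also have "\<dots> < 3 * (t + 1 / t) + \<xi>"
    using add_inverse_less[of t "2 * t"] zeta1_sq(2)[OF assms(2)] t by (simp add: t_def)
  also have "\<dots> = theta_factor \<xi> t 0"
    by (simp add: theta_factor_0 algebra_simps)
  finally show "0 < theta_factor \<xi> t 0" .
  define K where "K = t + 2 + 1/t"
  have "theta_factor \<xi> t 0 = 3 * K + \<xi> - 6"
    by (simp add: theta_factor_def K_def)
  moreover have "0 < K"
    using t by (simp add: K_def add_pos_pos)
  ultimately show "theta_factor \<xi> t 0 < 8 * (t + 2 + 1/t)"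
    using assms(2) unfolding K_def[symmetric] by linarith
qed

lemma tan_bounds_of_le_arctan:
  fixes \<phi> \<eta> :: real
  assumes "0 < \<phi>" "\<phi> \<le> arctan \<eta>"
  shows "0 < tan \<phi>" "tan \<phi> \<le> \<eta>"
proof -
  have "\<phi> < pi / 2"
    using assms arctan_ubound[of \<eta>] by linarith
  then show "0 < tan \<phi>" "tan \<phi> \<le> \<eta>"
    using assms arctan_tan[of \<phi>] arctan_le_iff[of "tan \<phi>" \<eta>] by (auto intro: tan_gt_zero)
qed

lemma theta_factor_sector_bound:
  fixes \<xi> t a \<tau> :: real and z :: complex
  defines "d \<equiv> theta_factor \<xi> t 0"
  assumes "t \<le> 1" "\<xi> < 6" "0 \<le> d" "0 < \<tau>" "\<tau> \<le> 1" "\<tau> \<le> d / (8 * (t + 2 + 1/t))" "2 * a\<^sup>2 \<le> t"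
    and "\<bar>Re z\<bar> < a" "\<bar>Im z\<bar> < \<bar>Re z\<bar> * \<tau>"
  shows "0 < cmod z" "cmod z < 1" "d / 2 \<le> theta_factor \<xi> ((cmod z)\<^sup>2) ((sin (Arg z))\<^sup>2)"
proof -
  note sector = sector_bounds[OF assms(9,10,6)]
  show "0 < cmod z"
    by (fact sector(1))
  have "(cmod z)\<^sup>2 < t"
    using sector(2) assms(8) by linarith
  then show "cmod z < 1"
    using assms(2) power2_less_imp_less[of "cmod z" 1] by simp
  have "\<tau>\<^sup>2 \<le> \<tau>"
    using assms(5,6) by (simp add: power2_eq_square mult_left_le)
  then show "d / 2 \<le> theta_factor \<xi> ((cmod z)\<^sup>2) ((sin (Arg z))\<^sup>2)"
    unfolding d_def using sector \<open>(cmod z)\<^sup>2 < t\<close> assms(2-4,7)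
    by (intro theta_factor_lower_bound) (auto simp: d_def)
qed

theorem mainTheorem3:
  fixes \<xi> :: real
  assumes "\<xi> < -6"
  shows "\<exists>\<phi>0. 0 < \<phi>0 \<and> \<phi>0 \<le> pi / 4 \<and>
    (\<forall>\<phi>. 0 < \<phi> \<and> \<phi> \<le> \<phi>0 \<longrightarrow>
      (\<exists>c>0.
        (\<forall>z \<in> Omega01 \<xi> \<phi> \<union> Omega02 \<xi> \<phi>.
           Re (2 * \<i> * theta \<xi> z) \<ge> c * \<bar>sin (Arg z)\<bar> * (1 / cmod z - cmod z)) \<and>
        (\<forall>z \<in> Omega03 \<xi> \<phi> \<union> Omega04 \<xi> \<phi>.
           Re (2 * \<i> * theta \<xi> z) \<le> - c * \<bar>sin (Arg z)\<bar> * (1 / cmod z - cmod z))))"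
proof -
  define t where "t = (zeta1 \<xi>)\<^sup>2 / 2"
  define d where "d = theta_factor \<xi> t 0"
  define \<eta> where "\<eta> = d / (8 * (t + 2 + 1/t))"
  note margin = half_zeta1_margin[OF assms, folded t_def d_def]
  have \<eta>: "0 < \<eta>" "\<eta> < 1"
    using margin by (auto simp: \<eta>_def divide_less_eq)
  have bound: "0 < cmod z" "cmod z < 1"
      "d / 2 \<le> theta_factor \<xi> ((cmod z)\<^sup>2) ((sin (Arg z))\<^sup>2)"
    if "0 < \<phi> \<and> \<phi> \<le> arctan \<eta>" "\<bar>Re z\<bar> < zeta1 \<xi> / 2" "\<bar>Im z\<bar> < \<bar>Re z\<bar> * tan \<phi>" for \<phi> z
  proof -
    have "2 * (zeta1 \<xi> / 2)\<^sup>2 \<le> t"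
      by (simp add: t_def power_divide)
    then show "0 < cmod z" "cmod z < 1" "d / 2 \<le> theta_factor \<xi> ((cmod z)\<^sup>2) ((sin (Arg z))\<^sup>2)"
      using theta_factor_sector_bound[of t \<xi> "tan \<phi>" "zeta1 \<xi> / 2" z, folded d_def, folded \<eta>_def]
        tan_bounds_of_le_arctan[of \<phi> \<eta>] that margin \<eta> assms
      by auto
  qed
  show ?thesis
  proof (rule exI[of _ "arctan \<eta>"], intro conjI allI impI exI[of _ "d / 2"] ballI)
    show "0 < arctan \<eta>" "arctan \<eta> \<le> pi / 4" "0 < d / 2"
      using \<eta> margin arctan_less_iff[of 0 \<eta>] arctan_le_iff[of \<eta> 1] by (simp_all add: arctan_one)
  next
    fix \<phi> z assume \<phi>: "0 < \<phi> \<and> \<phi> \<le> arctan \<eta>" and "z \<in> Omega01 \<xi> \<phi> \<union> Omega02 \<xi> \<phi>"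
    then have z: "\<bar>Re z\<bar> < zeta1 \<xi> / 2" "\<bar>Im z\<bar> < \<bar>Re z\<bar> * tan \<phi>" "0 < Im z"
      by (auto simp: Omega01_def Omega02_def)
    show "d / 2 * \<bar>sin (Arg z)\<bar> * (1 / cmod z - cmod z) \<le> Re (2 * \<i> * theta \<xi> z)"
      by (rule Re_2i_theta_bounds(1)[OF bound[OF \<phi> z(1,2)] z(3)])
  next
    fix \<phi> z assume \<phi>: "0 < \<phi> \<and> \<phi> \<le> arctan \<eta>" and "z \<in> Omega03 \<xi> \<phi> \<union> Omega04 \<xi> \<phi>"
    then have z: "\<bar>Re z\<bar> < zeta1 \<xi> / 2" "\<bar>Im z\<bar> < \<bar>Re z\<bar> * tan \<phi>" "Im z < 0"
      by (auto simp: Omega03_def Omega04_def)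
    show "Re (2 * \<i> * theta \<xi> z) \<le> - (d / 2) * \<bar>sin (Arg z)\<bar> * (1 / cmod z - cmod z)"
      by (rule Re_2i_theta_bounds(2)[OF bound[OF \<phi> z(1,2)] z(3)])
  qed
qed

end
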